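(* Let $g,h,K$ be complex numbers with $K\neq\tfrac12$, and set $K'=K(2K-1)^{-1}$. For any complex $L$ let $$\hat R(L;g,h)=\begin{pmatrix}1&-hL&hL&ghL\\0&1-L&L&gL\\0&L&1-L&-gL\\0&0&0&1\end{pmatrix},\qquad R(L;g,h)=P\hat R(L;g,h).$$ Then $R(K';g,h)$ is invertible and $$P\,R(K;g,h)\,P=\big(R(K';g,h)\big)^{-1}.$$
   Context: Matrices are written in the ordered basis $e_1\otimes e_1,e_1\otimes e_2,e_2\otimes e_1,e_2\otimes e_2$ of $\mathbb{C}^2\otimes\mathbb{C}^2$; $P$ is the flip matrix, i.e. the $4\times4$ permutation matrix swapping the second and third basis vectors. The matrix $PRP$ is what the paper denotes $(21)R$. *)

theory Defs
  imports "HOL-Analysis.Analysis"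
begin

text \<open>4x4 complex matrices in the ordered basis e1e1, e1e2, e2e1, e2e2
  (rows/columns indexed 1,2,3,4 of type 4).\<close>

definition flipP :: "complex^4^4" where
  "flipP = vector [vector [1,0,0,0], vector [0,0,1,0], vector [0,1,0,0], vector [0,0,0,1]]"

definition Rhat :: "complex \<Rightarrow> complex \<Rightarrow> complex \<Rightarrow> complex^4^4" where
  "Rhat L g h = vector [vector [1, -h*L, h*L, g*h*L],
                        vector [0, 1 - L, L, g*L],
                        vector [0, L, 1 - L, -g*L],
                        vector [0, 0, 0, 1]]"

definition Rmat :: "complex \<Rightarrow> complex \<Rightarrow> complex \<Rightarrow> complex^4^4" where
  "Rmat L g h = flipP ** Rhat L g h"

end

theory Submission
  imports Defs
begin

text \<open>Write \<open>Rhat L = I - L M\<close>, where \<open>M\<close> is independent of \<open>L\<close> and satisfies \<open>M\<^sup>2 = 2 M\<close>.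
  Then \<open>Rhat L Rhat K = Rhat (K + L - 2 K L)\<close>, and \<open>K' = K / (2 K - 1)\<close> is exactly the
  parameter with \<open>K + K' - 2 K K' = 0\<close>, so \<open>Rhat K' Rhat K = I\<close>. Since \<open>P\<^sup>2 = I\<close>, this gives
  \<open>R K' (P R K P) = P Rhat K' Rhat K P = I\<close>.\<close>

lemma matrix_inv_eq_right_inverse:
  fixes A B :: "'a::field^'n^'n"
  assumes AB: "A ** B = mat 1"
  shows "invertible A" "matrix_inv A = B"
proof -
  have BA: "B ** A = mat 1"
    using AB matrix_left_right_inverse by blast
  then show inv: "invertible A"
    unfolding invertible_def using AB by blast
  have "matrix_inv A ** A = mat 1"
    using inv unfolding invertible_def matrix_inv_def by (rule someI_ex[THEN conjunct2])
  then have "matrix_inv A = matrix_inv A ** (A ** B)"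
    using AB by simp
  also have "\<dots> = B"
    using \<open>matrix_inv A ** A = mat 1\<close> by (simp add: matrix_mul_assoc)
  finally show "matrix_inv A = B" .
qed

lemma vector_4_nth [simp]:
  "(vector [a, b, c, d] :: 'a::zero^4) $ 1 = a"
  "(vector [a, b, c, d] :: 'a::zero^4) $ 2 = b"
  "(vector [a, b, c, d] :: 'a::zero^4) $ 3 = c"
  "(vector [a, b, c, d] :: 'a::zero^4) $ 4 = d"
  by (simp_all add: vector_def)

lemma flipP_mult_flipP: "flipP ** flipP = mat 1"
  unfolding flipP_def
  by (simp add: vec_eq_iff forall_4 matrix_matrix_mult_def sum_4 mat_def)

lemma Rhat_0: "Rhat 0 g h = mat 1"
  unfolding Rhat_def by (simp add: vec_eq_iff forall_4 mat_def)

lemma Rhat_mult_Rhat: "Rhat L g h ** Rhat K g h = Rhat (K + L - 2*K*L) g h"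
  unfolding Rhat_def
  by (simp add: vec_eq_iff forall_4 matrix_matrix_mult_def sum_4) (simp add: algebra_simps)

lemma flipP_conj_Rmat: "flipP ** Rmat K g h ** flipP = Rhat K g h ** flipP"
  unfolding Rmat_def by (simp add: matrix_mul_assoc flipP_mult_flipP)

theorem mainTheorem10:
  fixes g h K :: complex
  assumes "K \<noteq> 1/2"
  defines "K' \<equiv> K / (2*K - 1)"
  shows "invertible (Rmat K' g h) \<and> flipP ** Rmat K g h ** flipP = matrix_inv (Rmat K' g h)"
proof -
  have "2*K - 1 \<noteq> 0"
    using assms(1) by (auto simp: field_simps)
  then have unitarity: "Rhat K' g h ** Rhat K g h = mat 1"
    unfolding Rhat_mult_Rhat K'_def by (simp add: field_simps Rhat_0)
  have "Rmat K' g h ** (flipP ** Rmat K g h ** flipP) = flipP ** (Rhat K' g h ** Rhat K g h) ** flipP"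
    unfolding flipP_conj_Rmat Rmat_def by (metis matrix_mul_assoc matrix_mul_lid flipP_mult_flipP)
  also have "\<dots> = mat 1"
    by (simp add: unitarity flipP_mult_flipP)
  finally show ?thesis
    using matrix_inv_eq_right_inverse by metis
qed

end
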